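(* Let $q=p^h$ with $p$ prime and $h\geq 1$, let $n\ge 2$ and let $k$ be an integer with $n/2\leq k\leq n-1$. Then \[\mathrm{C}_k(n,q)\setminus \mathrm{C}_{n-k}(n,q)^\perp=\mathrm{C}_k(n,q)\setminus \mathrm{C}_k(n,q)^\perp.\]
   Context: $\mathrm{PG}(n,q)$ is the $n$-dimensional projective space over $\mathbb{F}_q$, $q=p^h$; $\theta_n=(q^{n+1}-1)/(q-1)$. For $1\le j\le n-1$, $\mathrm{C}_j(n,q)$ is the $p$-ary linear code (a subspace of $\mathbb{F}_p^{\theta_n}$, coordinates indexed by the points of $\mathrm{PG}(n,q)$) spanned over $\mathbb{F}_p$ by the incidence vectors of the $j$-dimensional subspaces of $\mathrm{PG}(n,q)$, and $\mathrm{C}_j(n,q)^\perp$ is its dual with respect to the standard scalar product over $\mathbb{F}_p$. *)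

theory Defs
  imports Complex_Main "HOL-Library.Function_Algebras" "HOL-Library.Cardinality" "HOL-Computational_Algebra.Primes"
begin

text \<open>The ambient vector space F_q^(n+1): functions nat => F_q vanishing outside {0..n}.\<close>

definition fvec :: "nat \<Rightarrow> (nat \<Rightarrow> 'a::zero) set" where
  "fvec n = {x. \<forall>i>n. x i = 0}"

definition vscale :: "'a::field \<Rightarrow> (nat \<Rightarrow> 'a) \<Rightarrow> (nat \<Rightarrow> 'a)" where
  "vscale c x = (\<lambda>i. c * x i)"

text \<open>S is a linear subspace of F_q^(n+1) of vector dimension d
  (i.e. a projective subspace of PG(n,q) of projective dimension d-1).\<close>

definition lin_sub :: "nat \<Rightarrow> nat \<Rightarrow> (nat \<Rightarrow> 'a::field) set \<Rightarrow> bool" where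
  "lin_sub n d S \<longleftrightarrow> S \<subseteq> fvec n \<and> module.subspace vscale S \<and> vector_space.dim vscale S = d"

definition pg_points :: "nat \<Rightarrow> (nat \<Rightarrow> 'a::field) set set" where
  "pg_points n = {S. lin_sub n 1 S}"

definition pg_subspaces :: "nat \<Rightarrow> nat \<Rightarrow> (nat \<Rightarrow> 'a::field) set set" where
  "pg_subspaces n j = {S. lin_sub n (j + 1) S}"

text \<open>Incidence vector (over the field 'b = F_p) of a subspace S, coordinates indexed by points.\<close>

definition incid :: "nat \<Rightarrow> (nat \<Rightarrow> 'a::field) set \<Rightarrow> ((nat \<Rightarrow> 'a) set \<Rightarrow> 'b::field)" where
  "incid n S = (\<lambda>P. if P \<in> pg_points n \<and> P \<subseteq> S then 1 else 0)"

definition cscale :: "'b::field \<Rightarrow> ('c \<Rightarrow> 'b) \<Rightarrow> ('c \<Rightarrow> 'b)" where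
  "cscale c f = (\<lambda>P. c * f P)"

definition pcode :: "nat \<Rightarrow> nat \<Rightarrow> ((nat \<Rightarrow> 'a::field) set \<Rightarrow> 'b::field) set" where
  "pcode n j = module.span cscale (incid n ` pg_subspaces n j)"

definition pdual :: "nat \<Rightarrow> ((nat \<Rightarrow> 'a::field) set \<Rightarrow> 'b::field) set \<Rightarrow> ((nat \<Rightarrow> 'a) set \<Rightarrow> 'b) set" where
  "pdual n C = {v. (\<forall>P. P \<notin> pg_points n \<longrightarrow> v P = 0) \<and>
                   (\<forall>c\<in>C. (\<Sum>P\<in>pg_points n. v P * c P) = 0)}"

end

theory Submission
  imports Defs "HOL-Number_Theory.Residues"
begin

(*
  Write q = |F_q| and let K, L be subspaces of F_q^(n+1) of vector
  dimensions d1, d2 with d1 + d2 >= n + 2.  Then K and L meet in a nonzero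
  subspace T, and the number N of projective points in T satisfies
  (q - 1) N = |T| - 1 with q dividing |T|; hence N = 1 in any field whose
  characteristic divides q.  So the incidence vectors of K and L have scalar
  product 1 over F_p.  For k >= n/2 this applies to a k-space paired with a
  k-space and to a k-space paired with an (n-k)-space.  Consequently a codeword
  c = sum a_i v_{K_i} of C_k has the same scalar product s = sum a_i with every
  generator of C_k and of C_{n-k}, so c lies in C_k^perp iff s = 0 iff c lies
  in C_{n-k}^perp (both generator families being nonempty).
*)

interpretation V: vector_space "vscale :: 'a::field \<Rightarrow> (nat \<Rightarrow> 'a) \<Rightarrow> _"
  by unfold_locales (auto simp: vscale_def algebra_simps)

interpretation C: vector_space "cscale :: 'b::field \<Rightarrow> ('c \<Rightarrow> 'b) \<Rightarrow> _"
  by unfold_locales (auto simp: cscale_def algebra_simps)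

section \<open>The ambient space F_q^(n+1)\<close>

lemma sum_apply: "(\<Sum>i\<in>A. f i) (x::'x) = (\<Sum>i\<in>A. f i x)"
  by (induction A rule: infinite_finite_induct) auto

definition unit_vec :: "nat \<Rightarrow> nat \<Rightarrow> 'a::{zero,one}" where
  "unit_vec i = (\<lambda>j. if j = i then 1 else 0)"

lemma fvec_subset_span_unit_vecs: "fvec n \<subseteq> V.span (unit_vec ` {..n} :: (nat \<Rightarrow> 'a::field) set)"
proof
  fix x :: "nat \<Rightarrow> 'a" assume x: "x \<in> fvec n"
  have "x = (\<Sum>i\<in>{..n}. vscale (x i) (unit_vec i))"
  proof
    fix j
    have "(\<Sum>i\<in>{..n}. vscale (x i) (unit_vec i)) j = (\<Sum>i\<in>{..n}. if i = j then x j else 0)"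
      unfolding sum_apply by (intro sum.cong) (auto simp: vscale_def unit_vec_def)
    also have "\<dots> = x j" using x by (auto simp: fvec_def)
    finally show "x j = (\<Sum>i\<in>{..n}. vscale (x i) (unit_vec i)) j" by simp
  qed
  also have "\<dots> \<in> V.span (unit_vec ` {..n})"
    by (intro V.span_sum V.span_scale V.span_base) auto
  finally show "x \<in> V.span (unit_vec ` {..n})" .
qed

lemma independent_fvec_bound:
  assumes "V.independent B" and "B \<subseteq> (fvec n :: (nat \<Rightarrow> 'a::field) set)"
  shows "finite B" and "card B \<le> n + 1"
proof -
  have "B \<subseteq> V.span (unit_vec ` {..n} :: (nat \<Rightarrow> 'a) set)"
    using assms(2) fvec_subset_span_unit_vecs by blast
  then have "finite B \<and> card B \<le> card (unit_vec ` {..n} :: (nat \<Rightarrow> 'a) set)"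
    using V.independent_span_bound[OF _ assms(1)] by blast
  moreover have "card (unit_vec ` {..n} :: (nat \<Rightarrow> 'a) set) \<le> n + 1"
    using card_image_le[of "{..n}" unit_vec] by simp
  ultimately show "finite B" and "card B \<le> n + 1" by auto
qed

lemma finite_fvec: "finite (fvec n :: (nat \<Rightarrow> 'a::{finite,zero}) set)"
proof -
  have "fvec n \<subseteq> (\<lambda>g i. if i \<le> n then g i else 0) ` PiE {..n} (\<lambda>_. (UNIV :: 'a set))"
  proof
    fix f :: "nat \<Rightarrow> 'a" assume "f \<in> fvec n"
    then show "f \<in> (\<lambda>g i. if i \<le> n then g i else 0) ` PiE {..n} (\<lambda>_. UNIV)"
      by (intro image_eqI[of _ _ "restrict f {..n}"]) (auto simp: fvec_def)
  qed
  then show ?thesis by (rule finite_subset) (intro finite_imageI finite_PiE; simp)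
qed

lemma finite_pg_points: "finite (pg_points n :: (nat \<Rightarrow> 'a::{finite,field}) set set)"
  using finite_fvec by (rule rev_finite_subset[OF finite_Pow_iff[THEN iffD2]])
    (auto simp: pg_points_def lin_sub_def)

lemma fvec_subspace: "V.subspace (fvec n :: (nat \<Rightarrow> 'a::field) set)"
  by (auto simp: V.subspace_def fvec_def vscale_def)

lemma lin_sub_basis:
  assumes "lin_sub n d (K :: (nat \<Rightarrow> 'a::field) set)"
  obtains B where "B \<subseteq> K" "V.independent B" "finite B" "card B = d" "V.span B = K"
proof -
  obtain B where B: "B \<subseteq> K" "V.independent B" "K \<subseteq> V.span B" "card B = V.dim K"
    using V.basis_exists by blast
  have "finite B" using independent_fvec_bound(1)[OF B(2)] B(1) assms by (auto simp: lin_sub_def)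
  moreover have "V.span B = K" using B assms by (intro V.span_subspace) (auto simp: lin_sub_def)
  ultimately show ?thesis using B assms that by (auto simp: lin_sub_def)
qed

lemma independent_Un_trivial_meet:
  assumes K: "V.subspace K" and L: "V.subspace L" and KL: "K \<inter> L \<subseteq> {0}"
    and B: "V.independent B" "B \<subseteq> (K :: (nat \<Rightarrow> 'a::field) set)"
    and D: "V.independent D" "D \<subseteq> L"
  shows "V.independent (B \<union> D)"
  unfolding V.independent_explicit_module
proof (intro allI impI)
  fix t u v assume t: "finite t" "t \<subseteq> B \<union> D" and sum0: "(\<Sum>x\<in>t. vscale (u x) x) = 0"
    and v: "v \<in> t"
  define sB where "sB = (\<Sum>x\<in>t \<inter> B. vscale (u x) x)"
  define sD where "sD = (\<Sum>x\<in>t - B. vscale (u x) x)"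
  have "sB + sD = 0"
    using sum0 sum.Int_Diff[OF t(1), of _ B] unfolding sB_def sD_def by metis
  then have sB_eq: "sB = - sD" by (simp add: eq_neg_iff_add_eq_0)
  have "sB \<in> K" unfolding sB_def using B(2) by (intro V.subspace_sum[OF K] V.subspace_scale[OF K]) auto
  moreover have "sD \<in> L" unfolding sD_def using t(2) D(2)
    by (intro V.subspace_sum[OF L] V.subspace_scale[OF L]) auto
  then have "sB \<in> L" using sB_eq L by (simp add: V.subspace_neg)
  ultimately have "sB = 0" "sD = 0" using KL sB_eq by auto
  then show "u v = 0"
    using V.independentD[OF B(1), of "t \<inter> B" u] V.independentD[OF D(1), of "t - B" u] t v
    unfolding sB_def sD_def by blast
qed

lemma lin_sub_meet:
  assumes K: "lin_sub n d1 (K :: (nat \<Rightarrow> 'a::field) set)" and L: "lin_sub n d2 L"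
    and dims: "n + 2 \<le> d1 + d2"
  obtains v where "v \<in> K \<inter> L" "v \<noteq> 0"
proof (rule ccontr)
  assume "\<not> thesis"
  then have KL: "K \<inter> L \<subseteq> {0}" using that by auto
  obtain B where B: "B \<subseteq> K" "V.independent B" "finite B" "card B = d1"
    by (rule lin_sub_basis[OF K])
  obtain D where D: "D \<subseteq> L" "V.independent D" "finite D" "card D = d2"
    by (rule lin_sub_basis[OF L])
  have "0 \<notin> B" using B(2) V.dependent_zero by blast
  then have "B \<inter> D = {}" using B(1) D(1) KL by blast
  then have "card (B \<union> D) = d1 + d2" using B D by (simp add: card_Un_disjoint)
  moreover have "V.independent (B \<union> D)"
    using K L KL B D by (intro independent_Un_trivial_meet) (auto simp: lin_sub_def)
  then have "card (B \<union> D) \<le> n + 1"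
    using B(1) D(1) K L by (intro independent_fvec_bound(2)) (auto simp: lin_sub_def)
  ultimately show False using dims by simp
qed

lemma lin_sub_smaller:
  assumes K: "lin_sub n d (K :: (nat \<Rightarrow> 'a) set)" and "e \<le> d"
  obtains L :: "(nat \<Rightarrow> 'a::field) set" where "lin_sub n e L"
proof -
  obtain B where B: "B \<subseteq> K" "V.independent B" "finite B" "card B = d" "V.span B = K"
    by (rule lin_sub_basis[OF K])
  obtain B' where B': "B' \<subseteq> B" "card B' = e"
    using obtain_subset_with_card_n[of e B] assms(2) B(4) by auto
  have "V.span B' \<subseteq> fvec n" using V.span_mono[OF B'(1)] B(5) K by (auto simp: lin_sub_def)
  moreover have "V.dim (V.span B') = e"
    using V.dim_span_eq_card_independent[OF V.independent_mono[OF B(2) B'(1)]] B'(2) by simp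
  ultimately have "lin_sub n e (V.span B')" by (simp add: lin_sub_def)
  then show ?thesis by (rule that)
qed

section \<open>Points of PG(n,q) and counting points in a subspace\<close>

lemma point_iff_line:
  "lin_sub n 1 (P :: (nat \<Rightarrow> 'a::field) set) \<longleftrightarrow> (\<exists>v. v \<noteq> 0 \<and> v \<in> fvec n \<and> P = V.span {v})"
proof
  assume P: "lin_sub n 1 P"
  obtain B where B: "B \<subseteq> P" "V.independent B" "card B = 1" "V.span B = P"
    by (rule lin_sub_basis[OF P])
  then obtain v where "B = {v}" by (auto simp: card_Suc_eq)
  then show "\<exists>v. v \<noteq> 0 \<and> v \<in> fvec n \<and> P = V.span {v}"
    using B P V.dependent_zero by (auto simp: lin_sub_def)
next
  assume "\<exists>v. v \<noteq> 0 \<and> v \<in> fvec n \<and> P = V.span {v}"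
  then obtain v where v: "v \<noteq> 0" "v \<in> fvec n" "P = V.span {v}" by blast
  have "V.independent {v}" using v(1) by (simp add: V.independent_insert)
  then have "V.dim P = 1" using V.dim_span_eq_card_independent v(3) by fastforce
  moreover have "P \<subseteq> fvec n" using v(2,3) fvec_subspace V.span_minimal[of "{v}"] by auto
  ultimately show "lin_sub n 1 P" by (simp add: lin_sub_def v(3))
qed

lemma point_spanned_by_member:
  assumes P: "lin_sub n 1 (P :: (nat \<Rightarrow> 'a::field) set)" and w: "w \<in> P" "w \<noteq> 0"
  shows "P = V.span {w}"
proof -
  obtain v where v: "P = V.span {v}" using P point_iff_line by blast
  obtain a where a: "w = vscale a v" using w(1) v by (auto simp: V.span_singleton)
  then have "a \<noteq> 0" using w(2) by (auto simp: vscale_def fun_eq_iff)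
  then have "v = vscale (inverse a) w" using a by (simp add: vscale_def fun_eq_iff)
  then have "v \<in> V.span {w}" by (simp add: V.span_base V.span_scale)
  then have "V.span {v} \<subseteq> V.span {w}" using V.span_minimal[of "{v}"] by simp
  moreover have "V.span {w} \<subseteq> V.span {v}" using w(1) v V.span_minimal[of "{w}"] by simp
  ultimately show ?thesis using v by blast
qed

lemma card_affine_line:
  assumes "(v :: nat \<Rightarrow> 'a::{finite,field}) \<noteq> 0"
  shows "card (range (\<lambda>c. x + vscale c v)) = CARD('a)"
proof -
  obtain i where i: "v i \<noteq> 0" using assms by (auto simp: fun_eq_iff)
  have "inj (\<lambda>c. x + vscale c v)"
  proof (rule injI)
    fix c d assume "x + vscale c v = x + vscale d v"
    then have "c * v i = d * v i" by (auto simp: vscale_def dest: fun_cong[of _ _ i])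
    then show "c = d" using i by simp
  qed
  then show ?thesis by (simp add: card_image)
qed

text \<open>A finite subspace containing a nonzero vector v has cardinality divisible by q:
  it is partitioned into the translates of the line through v.\<close>

lemma card_subspace_dvd:
  fixes T :: "(nat \<Rightarrow> 'a::{finite,field}) set"
  assumes T: "finite T" "V.subspace T" and v: "v \<in> T" "v \<noteq> 0"
  shows "CARD('a) dvd card T"
proof (rule equiv_imp_dvd_card[OF T(1)])
  define r where "r = {(x, y). x \<in> T \<and> y \<in> T \<and> (\<exists>c. y = x + vscale c v)}"
  have shift: "x + vscale c v \<in> T" if "x \<in> T" for x c
    using that v T(2) by (intro V.subspace_add V.subspace_scale) auto
  show "equiv T r"
  proof (rule equivI)
    show "r \<subseteq> T \<times> T" by (auto simp: r_def)
    show "refl_on T r" unfolding refl_on_def r_def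
      by (auto intro: exI[of _ 0] simp: vscale_def fun_eq_iff)
    show "sym r"
    proof (rule symI)
      fix x y assume "(x, y) \<in> r"
      then obtain c where "x \<in> T" "y \<in> T" "y = x + vscale c v" by (auto simp: r_def)
      then show "(y, x) \<in> r" unfolding r_def
        by (auto simp: V.scale_minus_left intro!: exI[of _ "- c"])
    qed
    show "trans r"
    proof (rule transI)
      fix x y z assume "(x, y) \<in> r" "(y, z) \<in> r"
      then obtain c d where "x \<in> T" "z \<in> T" "y = x + vscale c v" "z = y + vscale d v"
        by (auto simp: r_def)
      then show "(x, z) \<in> r" unfolding r_def
        by (auto simp: add.assoc V.scale_left_distrib intro!: exI[of _ "c + d"])
    qed
  qed
  fix X assume "X \<in> T // r"
  then obtain x where x: "x \<in> T" "X = r `` {x}" by (auto elim: quotientE)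
  then have "X = range (\<lambda>c. x + vscale c v)" using shift by (auto simp: r_def)
  then show "CARD('a) dvd card X" using card_affine_line[OF v(2)] by simp
qed

text \<open>A subspace T of F_q^(n+1) contains (|T| - 1)/(q - 1) points of PG(n,q): the
  sets P - {0} for the points P in T partition T - {0} into blocks of size q - 1.\<close>

lemma count_points_in_subspace:
  fixes T :: "(nat \<Rightarrow> 'a::{finite,field}) set"
  assumes T: "T \<subseteq> fvec n" "V.subspace T"
  shows "(CARD('a) - 1) * card {P\<in>pg_points n. P \<subseteq> T} = card T - 1"
proof -
  define Pts where "Pts = {P\<in>pg_points n. P \<subseteq> T}"
  have pts: "P \<in> Pts \<longleftrightarrow> lin_sub n 1 P \<and> P \<subseteq> T" for P
    by (simp add: Pts_def pg_points_def)
  have finT: "finite T" using T(1) finite_fvec finite_subset by blast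
  have finPts: "finite Pts" unfolding Pts_def using finite_pg_points by (rule finite_subset[rotated]) auto
  have zero_in: "0 \<in> P" if "P \<in> Pts" for P
    using that pts by (auto simp: lin_sub_def intro: V.subspace_0)
  have card_block: "card (P - {0}) = CARD('a) - 1" if "P \<in> Pts" for P
  proof -
    have "lin_sub n 1 P" using that pts by blast
    then obtain v where "v \<noteq> 0" "P = V.span {v}" using point_iff_line by blast
    then have "card P = CARD('a)" using card_affine_line[of v 0] by (simp add: V.span_singleton)
    then show ?thesis using zero_in[OF that] finT that pts by (simp add: card_Diff_singleton_if)
  qed
  have "(CARD('a) - 1) * card ((\<lambda>P. P - {0}) ` Pts) = card (\<Union>P\<in>Pts. P - {0})"
  proof (rule card_partition)
    show "finite ((\<lambda>P. P - {0}) ` Pts)" using finPts by simp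
    show "finite (\<Union>((\<lambda>P. P - {0}) ` Pts))" using finT by (rule rev_finite_subset) (auto simp: pts)
    show "card c = CARD('a) - 1" if "c \<in> (\<lambda>P. P - {0}) ` Pts" for c
      using that card_block by auto
    show "c1 \<inter> c2 = {}"
      if c: "c1 \<in> (\<lambda>P. P - {0}) ` Pts" "c2 \<in> (\<lambda>P. P - {0}) ` Pts" "c1 \<noteq> c2" for c1 c2
    proof -
      obtain P1 P2 where P: "P1 \<in> Pts" "P2 \<in> Pts" "c1 = P1 - {0}" "c2 = P2 - {0}"
        using c(1,2) by blast
      have "P1 = P2" if "w \<in> P1" "w \<in> P2" "w \<noteq> 0" for w
        using point_spanned_by_member[of n P1 w] point_spanned_by_member[of n P2 w] that P pts
        by simp
      then show ?thesis using P c(3) by blast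
    qed
  qed
  moreover have "card ((\<lambda>P. P - {0}) ` Pts) = card Pts"
  proof (rule card_image, rule inj_onI)
    fix P1 P2 assume "P1 \<in> Pts" "P2 \<in> Pts" "P1 - {0} = P2 - {0}"
    then show "P1 = P2" using zero_in by (metis insert_Diff)
  qed
  moreover have "(\<Union>P\<in>Pts. P - {0}) = T - {0}"
  proof
    show "(\<Union>P\<in>Pts. P - {0}) \<subseteq> T - {0}" using pts by auto
    show "T - {0} \<subseteq> (\<Union>P\<in>Pts. P - {0})"
    proof
      fix x assume x: "x \<in> T - {0}"
      then have "V.span {x} \<in> Pts"
        using point_iff_line T V.span_minimal[of "{x}" T] by (auto simp: pts)
      then show "x \<in> (\<Union>P\<in>Pts. P - {0})" using x by (auto intro: V.span_base)
    qed
  qed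
  moreover have "card (T - {0}) = card T - 1" using T(2) finT by (simp add: V.subspace_0)
  ultimately show ?thesis by (simp add: Pts_def)
qed

lemma points_in_subspace_count_one:
  fixes T :: "(nat \<Rightarrow> 'a::{finite,field}) set"
  assumes T: "T \<subseteq> fvec n" "V.subspace T" "v \<in> T" "v \<noteq> 0"
    and q0: "(of_nat CARD('a) :: 'b::field) = 0"
  shows "(of_nat (card {P\<in>pg_points n. P \<subseteq> T}) :: 'b) = 1"
proof -
  have finT: "finite T" using T(1) finite_fvec finite_subset by blast
  obtain m where m: "card T = CARD('a) * m" using card_subspace_dvd[OF finT T(2-4)] by blast
  have "card T \<ge> 1" using finT T(3) card_0_eq by fastforce
  then have "(of_nat (card T - 1) :: 'b) = -1" using m q0 by (simp add: of_nat_diff)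
  moreover have "(of_nat (CARD('a) - 1) :: 'b) = -1" using q0 by (simp add: of_nat_diff)
  ultimately show ?thesis
    using arg_cong[OF count_points_in_subspace[OF T(1,2)], of "of_nat :: nat \<Rightarrow> 'b"] by simp
qed

section \<open>The scalar product on codes\<close>

definition pairing :: "nat \<Rightarrow> ((nat \<Rightarrow> 'a::field) set \<Rightarrow> 'b::field) \<Rightarrow> ((nat \<Rightarrow> 'a) set \<Rightarrow> 'b) \<Rightarrow> 'b"
  where "pairing n u w = (\<Sum>P\<in>pg_points n. u P * w P)"

lemma pairing_commute: "pairing n u w = pairing n w u"
  by (simp add: pairing_def mult.commute)

lemma pairing_zero_left: "pairing n 0 w = 0"
  by (simp add: pairing_def)

lemma pairing_add_left: "pairing n (u + u') w = pairing n u w + pairing n u' w"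
  by (simp add: pairing_def distrib_right sum.distrib)

lemma pairing_scale_left: "pairing n (cscale a u) w = a * pairing n u w"
  by (simp add: pairing_def cscale_def sum_distrib_left mult.assoc)

lemma pairing_incid:
  fixes K L :: "(nat \<Rightarrow> 'a::{finite,field}) set"
  assumes K: "lin_sub n d1 K" and L: "lin_sub n d2 L" and dims: "n + 2 \<le> d1 + d2"
    and q0: "(of_nat CARD('a) :: 'b::field) = 0"
  shows "pairing n (incid n K) (incid n L) = (1::'b)"
proof -
  have T: "K \<inter> L \<subseteq> fvec n" "V.subspace (K \<inter> L)"
    using K L by (auto simp: lin_sub_def intro: V.subspace_inter)
  obtain v where v: "v \<in> K \<inter> L" "v \<noteq> 0" by (rule lin_sub_meet[OF K L dims])
  have "pairing n (incid n K) (incid n L) = (\<Sum>P\<in>pg_points n. if P \<subseteq> K \<inter> L then (1::'b) else 0)"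
    unfolding pairing_def by (intro sum.cong) (auto simp: incid_def)
  also have "\<dots> = of_nat (card {P\<in>pg_points n. P \<subseteq> K \<inter> L})"
    by (simp add: sum.If_cases[OF finite_pg_points] Int_def)
  also have "\<dots> = 1" by (rule points_in_subspace_count_one[OF T v q0])
  finally show ?thesis .
qed

lemma span_supported:
  assumes "\<And>g P. g \<in> G \<Longrightarrow> P \<notin> pg_points n \<Longrightarrow> g P = 0"
    and "c \<in> C.span G" and "P \<notin> pg_points n"
  shows "c P = (0::'b::field)"
proof -
  have "C.subspace {u :: (nat \<Rightarrow> 'a::field) set \<Rightarrow> 'b. \<forall>P. P \<notin> pg_points n \<longrightarrow> u P = 0}"
    by (auto simp: C.subspace_def cscale_def)
  then have "C.span G \<subseteq> {u. \<forall>P. P \<notin> pg_points n \<longrightarrow> u P = 0}"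
    using assms(1) by (intro C.span_minimal) auto
  then show ?thesis using assms(2,3) by blast
qed

lemma pdual_span_iff:
  "v \<in> pdual n (C.span G) \<longleftrightarrow>
     (\<forall>P. P \<notin> pg_points n \<longrightarrow> v P = 0) \<and> (\<forall>g\<in>G. pairing n v g = 0)"
proof -
  have "C.subspace {c. pairing n v c = 0}"
    unfolding pairing_commute[of n v]
    by (simp add: C.subspace_def pairing_zero_left pairing_add_left pairing_scale_left)
  then have "C.span G \<subseteq> {c. pairing n v c = 0} \<longleftrightarrow> G \<subseteq> {c. pairing n v c = 0}"
    using C.span_superset[of G] C.span_minimal[of G "{c. pairing n v c = 0}"] by blast
  then show ?thesis by (auto simp: pdual_def pairing_def)
qed

text \<open>If every generator has scalar product 1 with every word of W, then each word of
  the spanned code has one and the same scalar product s with all words of W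
  (the sum of its coefficients); s can be nonzero only if there are generators.\<close>

lemma span_pairing_constant:
  assumes pair1: "\<And>g w. g \<in> G \<Longrightarrow> w \<in> W \<Longrightarrow> pairing n g w = 1"
    and c: "c \<in> C.span G"
  obtains s where "\<And>w. w \<in> W \<Longrightarrow> pairing n c w = s" and "s \<noteq> 0 \<Longrightarrow> G \<noteq> {}"
proof (cases "G = {}")
  case True
  then have "c = 0" using c by simp
  then show ?thesis using that[of 0] by (simp add: pairing_zero_left)
next
  case False
  define S where "S = {c. \<exists>s. \<forall>w\<in>W. pairing n c w = s}"
  have "C.subspace S"
    unfolding C.subspace_def S_def
    by (auto simp: pairing_zero_left pairing_add_left pairing_scale_left)
  moreover have "G \<subseteq> S" using pair1 by (auto simp: S_def)
  ultimately have "c \<in> S" using c C.span_minimal[of G S] by blast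
  then obtain s where "\<And>w. w \<in> W \<Longrightarrow> pairing n c w = s" by (auto simp: S_def)
  then show ?thesis using False that by blast
qed

text \<open>The key structural fact: if the generators of a code pair to 1 with each other and
  with the generators of a second code (nonempty whenever the first one is), then a word
  of the first code is orthogonal to the second code iff it is orthogonal to the first
  code -- both conditions say that its constant scalar product s vanishes.\<close>

lemma span_minus_dual_eq:
  assumes supp: "\<And>g P. g \<in> G \<Longrightarrow> P \<notin> pg_points n \<Longrightarrow> g P = 0"
    and pair1: "\<And>g w. g \<in> G \<Longrightarrow> w \<in> G \<union> H \<Longrightarrow> pairing n g w = 1"
    and nonempty: "G \<noteq> {} \<Longrightarrow> H \<noteq> {}"
  shows "C.span G - pdual n (C.span H) = C.span G - pdual n (C.span G)"
proof -
  have "c \<in> pdual n (C.span H) \<longleftrightarrow> c \<in> pdual n (C.span G)" if c: "c \<in> C.span G" for c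
  proof -
    obtain s where s: "\<And>w. w \<in> G \<union> H \<Longrightarrow> pairing n c w = s"
      and s_nonzero: "s \<noteq> 0 \<Longrightarrow> G \<noteq> {}"
      using span_pairing_constant[OF pair1 c] by blast
    have "\<forall>P. P \<notin> pg_points n \<longrightarrow> c P = 0" using span_supported[of G n c] supp c by blast
    then have dual_iff: "c \<in> pdual n (C.span X) \<longleftrightarrow> (\<forall>w\<in>X. pairing n c w = 0)" for X
      by (simp add: pdual_span_iff)
    show ?thesis
    proof (cases "s = 0")
      case True
      then show ?thesis using s by (simp add: dual_iff)
    next
      case False
      then have "G \<noteq> {}" "H \<noteq> {}" using s_nonzero nonempty by blast+
      then show ?thesis using s False by (auto simp: dual_iff)
    qed
  qed
  then show ?thesis by blast
qed

lemma pairing_incid_subspaces: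
  assumes "g \<in> incid n ` pg_subspaces n j" and "w \<in> incid n ` pg_subspaces n l"
    and "n \<le> j + l" and q0: "(of_nat CARD('a) :: 'b::field) = 0"
  shows "pairing n g (w :: (nat \<Rightarrow> 'a::{finite,field}) set \<Rightarrow> 'b) = 1"
proof -
  from assms(1) obtain K where "lin_sub n (j + 1) K" "g = incid n K"
    unfolding pg_subspaces_def by blast
  moreover from assms(2) obtain L where "lin_sub n (l + 1) L" "w = incid n L"
    unfolding pg_subspaces_def by blast
  ultimately show ?thesis using pairing_incid[OF _ _ _ q0] assms(3) by simp
qed

lemma pg_subspaces_nonempty:
  assumes "pg_subspaces n j \<noteq> ({} :: (nat \<Rightarrow> 'a::field) set set)" and "l \<le> j"
  shows "pg_subspaces n l \<noteq> ({} :: (nat \<Rightarrow> 'a) set set)"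
proof -
  from assms(1) obtain K :: "(nat \<Rightarrow> 'a) set" where K: "lin_sub n (j + 1) K"
    unfolding pg_subspaces_def by blast
  have "l + 1 \<le> j + 1" using assms(2) by simp
  then obtain L :: "(nat \<Rightarrow> 'a) set" where "lin_sub n (l + 1) L"
    by (rule lin_sub_smaller[OF K])
  then show ?thesis unfolding pg_subspaces_def by blast
qed

text \<open>If q is a positive power of |F_p|, then q vanishes in F_p (as |F_p| does in any
  finite ring).\<close>

lemma of_nat_card_vanishes:
  assumes "CARD('a) = CARD('b) ^ h" and "h \<ge> 1"
  shows "(of_nat CARD('a) :: 'b::{finite,ring_1}) = 0"
proof -
  have "(of_nat CARD('b) :: 'b) = 0" by (simp add: of_nat_eq_0_iff_char_dvd CHAR_dvd_CARD)
  then show ?thesis using assms by (simp add: power_0_left)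
qed

theorem mainTheorem6:
  fixes p h n k :: nat
  assumes "prime p" and "h \<ge> 1"
    and "CARD('a) = p ^ h"
    and "CARD('b) = p"
    and "n \<ge> 2" and "n \<le> 2 * k" and "k \<le> n - 1"
  shows "(pcode n k :: ((nat \<Rightarrow> 'a::{finite,field}) set \<Rightarrow> 'b::{finite,field}) set) - pdual n (pcode n (n - k))
       = (pcode n k :: ((nat \<Rightarrow> 'a) set \<Rightarrow> 'b) set) - pdual n (pcode n k)"
proof -
  have "CARD('a) = CARD('b) ^ h" using assms(3,4) by simp
  then have q0: "(of_nat CARD('a) :: 'b) = 0" using assms(2) by (rule of_nat_card_vanishes)
  define G where "G = (incid n ` pg_subspaces n k :: ((nat \<Rightarrow> 'a) set \<Rightarrow> 'b) set)"
  define H where "H = (incid n ` pg_subspaces n (n - k) :: ((nat \<Rightarrow> 'a) set \<Rightarrow> 'b) set)"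
  \<comment> \<open>since 2k \<ge> n, a k-space meets every k-space and every (n-k)-space\<close>
  have "n \<le> k + k" "n \<le> k + (n - k)" using assms(6,7) by auto
  then have pair1: "pairing n g w = 1" if "g \<in> G" and "w \<in> G \<union> H" for g w
    using that pairing_incid_subspaces[OF _ _ _ q0] unfolding G_def H_def by blast
  have "n - k \<le> k" using assms(6) by simp
  then have nonempty: "H \<noteq> {}" if "G \<noteq> {}"
    using that pg_subspaces_nonempty unfolding G_def H_def by simp
  have supp: "g P = 0" if "g \<in> G" and "P \<notin> pg_points n" for g P
    using that unfolding G_def by (auto simp: incid_def)
  have "C.span G - pdual n (C.span H) = C.span G - pdual n (C.span G)"
    by (rule span_minus_dual_eq) (fact supp pair1 nonempty)+
  then show ?thesis unfolding pcode_def G_def H_def .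
qed

end
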